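(* Let $X$ be a Hausdorff topological space and $\Phi$ a local semiflow on $X$. Let $M\subset X$ be a closed strongly admissible set, and let $\gamma_n$ be a sequence of solutions contained in $M$, each $\gamma_n$ defined on $[-t_n,t_n]$, with $t_n\to\infty$. Then there exist a subsequence $\gamma_{n_k}$ and a full solution $\gamma$ contained in $M$ such that for every compact interval $J\subset\mathbb R$ and every neighborhood $\mathcal V$ of $\mathcal T_\gamma(J)$ in $J\times X$, there exists $k_0$ with $\mathcal T_{\gamma_{n_k}}(J)\subset\mathcal V$ for all $k>k_0$.
   Context: A local semiflow $\Phi$ on $X$ is a continuous map from an open subset $\mathcal D_\Phi\subset\mathbb R^+\times X$ to $X$ such that: (i) for each $x\in X$ there is $T_x\in(0,\infty]$ with $(t,x)\in\mathcal D_\Phi$ iff $t\in[0,T_x)$; (ii) $\Phi(0,x)=x$; (iii) if $(t+s,x)\in\mathcal D_\Phi$ with $t,s\ge0$, then $\Phi(t+s,x)=\Phi(t,\Phi(s,x))$. Write $\Phi(t)x=\Phi(t,x)$, and for $M\subset X$, $J\subset\mathbb R^+$, $\Phi(J)M=\{\Phi(t)x: x\in M,\ t\in J\cap[0,T_x)\}$. A solution on an interval $I\subset\mathbb R$ is a map $\gamma:I\to X$ with $\gamma(t)=\Phi(t-s)\gamma(s)$ for all $s\le t$ in $I$; a full solution is a solution on $\mathbb R$. Its trace on $I$ is $\mathcal T_\gamma(I)=\{(t,\gamma(t)):t\in I\}$. $\Phi$ does not explode in $M$ if $T_x=\infty$ whenever $\Phi([0,T_x))x\subset M$. $M$ is admissible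 if for any sequences $x_n\in M$ and $t_n\to\infty$ with $\Phi([0,t_n])x_n\subset M$ for all $n$, the sequence $\Phi(t_n)x_n$ has a convergent subsequence (in $X$); $M$ is strongly admissible if it is admissible and $\Phi$ does not explode in $M$. Convention: $U$ is a neighborhood of $A$ if $\overline A\subset\mathrm{int}\,U$; $J\times X$ has the product topology. *)

theory Defs
  imports "HOL-Analysis.Analysis"
begin

definition local_semiflow :: "(real \<times> 'a::topological_space) set \<Rightarrow> (real \<Rightarrow> 'a \<Rightarrow> 'a) \<Rightarrow> bool" where
  "local_semiflow D Phi \<longleftrightarrow>
     openin (top_of_set ({0..} \<times> UNIV)) D \<and>
     continuous_on D (\<lambda>(t, x). Phi t x) \<and>
     (\<forall>x. \<exists>T::ereal. T > 0 \<and> (\<forall>t. (t, x) \<in> D \<longleftrightarrow> 0 \<le> t \<and> ereal t < T)) \<and>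
     (\<forall>x. Phi 0 x = x) \<and>
     (\<forall>x t s. 0 \<le> t \<longrightarrow> 0 \<le> s \<longrightarrow> (t + s, x) \<in> D \<longrightarrow> Phi (t + s) x = Phi t (Phi s x))"

definition flow_image :: "(real \<times> 'a) set \<Rightarrow> (real \<Rightarrow> 'a \<Rightarrow> 'a) \<Rightarrow> real set \<Rightarrow> 'a set \<Rightarrow> 'a set" where
  "flow_image D Phi J M = {Phi t x | t x. x \<in> M \<and> t \<in> J \<and> (t, x) \<in> D}"

text \<open>Phi does not explode in M: T x = \<infinity> whenever Phi([0,T x))x \<subseteq> M.
  Since [0,T x) = {t. (t,x) \<in> D}, this says: if the whole forward orbit stays in M,
  then the orbit is defined for all times.\<close>
definition no_explosion :: "(real \<times> 'a) set \<Rightarrow> (real \<Rightarrow> 'a \<Rightarrow> 'a) \<Rightarrow> 'a set \<Rightarrow> bool" where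
  "no_explosion D Phi M \<longleftrightarrow>
     (\<forall>x. flow_image D Phi {0..} {x} \<subseteq> M \<longrightarrow> (\<forall>t\<ge>0. (t, x) \<in> D))"

definition admissible :: "(real \<times> 'a::topological_space) set \<Rightarrow> (real \<Rightarrow> 'a \<Rightarrow> 'a) \<Rightarrow> 'a set \<Rightarrow> bool" where
  "admissible D Phi M \<longleftrightarrow>
     (\<forall>(xs::nat \<Rightarrow> 'a) (ts::nat \<Rightarrow> real).
        (\<forall>n. xs n \<in> M) \<longrightarrow> filterlim ts at_top sequentially \<longrightarrow>
        (\<forall>n. flow_image D Phi {0..ts n} {xs n} \<subseteq> M) \<longrightarrow>
        (\<forall>n. (ts n, xs n) \<in> D) \<longrightarrow>
        (\<exists>r y. strict_mono r \<and> ((\<lambda>k. Phi (ts (r k)) (xs (r k))) \<longlongrightarrow> y) sequentially))"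

definition strongly_admissible :: "(real \<times> 'a::topological_space) set \<Rightarrow> (real \<Rightarrow> 'a \<Rightarrow> 'a) \<Rightarrow> 'a set \<Rightarrow> bool" where
  "strongly_admissible D Phi M \<longleftrightarrow> admissible D Phi M \<and> no_explosion D Phi M"

definition is_solution :: "(real \<times> 'a) set \<Rightarrow> (real \<Rightarrow> 'a \<Rightarrow> 'a) \<Rightarrow> real set \<Rightarrow> (real \<Rightarrow> 'a) \<Rightarrow> bool" where
  "is_solution D Phi I \<gamma> \<longleftrightarrow>
     (\<forall>s\<in>I. \<forall>t\<in>I. s \<le> t \<longrightarrow> (t - s, \<gamma> s) \<in> D \<and> \<gamma> t = Phi (t - s) (\<gamma> s))"

definition sol_trace :: "(real \<Rightarrow> 'a) \<Rightarrow> real set \<Rightarrow> (real \<times> 'a) set" where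
  "sol_trace \<gamma> I = {(t, \<gamma> t) | t. t \<in> I}"

definition nbhd_in :: "(real \<times> 'a::topological_space) set \<Rightarrow> real set \<Rightarrow> (real \<times> 'a) set \<Rightarrow> bool" where
  "nbhd_in U J A \<longleftrightarrow>
     (top_of_set (J \<times> UNIV)) closure_of A \<subseteq> (top_of_set (J \<times> UNIV)) interior_of U"

end

theory Submission
  imports Defs "HOL-Library.Diagonal_Subsequence"
begin

text \<open>By admissibility, for every integer n the values \<open>\<gamma>\<^sub>k(-n) = \<Phi>(t\<^sub>k - n) \<gamma>\<^sub>k(-t\<^sub>k)\<close>
  have a convergent subsequence; a diagonal subsequence converges at all \<open>-n\<close>, and by
  continuity of the flow and non-explosion in the closed set \<open>M\<close> it then converges at every
  time, to a full solution \<open>\<gamma>\<close> in \<open>M\<close>. Joint continuity of \<open>\<Phi>\<close> upgrades this to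
  \<open>\<gamma>\<^sub>k(\<tau>\<^sub>k) \<rightarrow> \<gamma>(\<tau>)\<close> whenever \<open>\<tau>\<^sub>k \<rightarrow> \<tau>\<close> in a compact interval, and a compactness argument
  turns that into the convergence of traces.\<close>

lemma local_semiflow_domain_nonneg:
  assumes "local_semiflow D Phi" "(t, x) \<in> D"
  shows "0 \<le> t"
  using assms unfolding local_semiflow_def by blast

text \<open>Since \<open>D\<close> is only open relative to \<open>[0,\<infinity>) \<times> X\<close>, the times must eventually be
  nonnegative for the approximating pairs to enter \<open>D\<close>.\<close>
lemma local_semiflow_tendsto:
  assumes "local_semiflow D Phi"
    and "(\<tau> \<longlongrightarrow> t) F" "(x \<longlongrightarrow> y) F" "(t, y) \<in> D"
    and "eventually (\<lambda>j. 0 \<le> \<tau> j) F"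
  shows "((\<lambda>j. Phi (\<tau> j) (x j)) \<longlongrightarrow> Phi t y) F"
proof -
  obtain U where U: "open U" "D = ({0..} \<times> UNIV) \<inter> U"
    using assms(1) unfolding local_semiflow_def openin_open by blast
  have pair: "((\<lambda>j. (\<tau> j, x j)) \<longlongrightarrow> (t, y)) F"
    using assms(2,3) by (rule tendsto_Pair)
  have "eventually (\<lambda>j. (\<tau> j, x j) \<in> U) F"
    using topological_tendstoD[OF pair] U assms(4) by blast
  then have in_D: "eventually (\<lambda>j. (\<tau> j, x j) \<in> D) F"
    using assms(5) by eventually_elim (simp add: U)
  have "continuous_on D (\<lambda>(t, x). Phi t x)"
    using assms(1) unfolding local_semiflow_def by blast
  from continuous_on_tendsto_compose[OF this pair assms(4) in_D] show ?thesis
    by simp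
qed

lemma nbhd_in_eventually:
  assumes "nbhd_in V J A" "A \<subseteq> J \<times> UNIV" "z \<in> A"
    and "(p \<longlongrightarrow> z) F" "eventually (\<lambda>j. p j \<in> J \<times> UNIV) F"
  shows "eventually (\<lambda>j. p j \<in> V) F"
proof -
  let ?X = "top_of_set (J \<times> (UNIV :: 'a::topological_space set))"
  have "A \<subseteq> ?X closure_of A"
    using assms(2) by (intro closure_of_subset) simp
  with assms(1,3) have z: "z \<in> ?X interior_of V"
    unfolding nbhd_in_def by blast
  obtain U where U: "open U" "?X interior_of V = (J \<times> UNIV) \<inter> U"
    using openin_interior_of[of ?X V] unfolding openin_open by blast
  have "eventually (\<lambda>j. p j \<in> U) F"
    using topological_tendstoD[OF assms(4) U(1)] z U(2) by blast
  with assms(5) show ?thesis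
  proof eventually_elim
    case (elim j)
    then have "p j \<in> ?X interior_of V"
      unfolding U(2) by blast
    then show ?case
      by (rule subsetD[OF interior_of_subset])
  qed
qed

locale solution_sequence =
  fixes D :: "(real \<times> 'a::t2_space) set"
    and Phi :: "real \<Rightarrow> 'a \<Rightarrow> 'a"
    and M :: "'a set"
    and \<gamma>s :: "nat \<Rightarrow> real \<Rightarrow> 'a"
    and ts :: "nat \<Rightarrow> real"
  assumes semiflow: "local_semiflow D Phi"
    and closed_M: "closed M"
    and strongly_admissible_M: "strongly_admissible D Phi M"
    and solution: "\<And>n. is_solution D Phi {-ts n..ts n} (\<gamma>s n)"
    and solution_in_M: "\<And>n. \<gamma>s n ` {-ts n..ts n} \<subseteq> M"
    and ts_at_top: "filterlim ts at_top sequentially"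
begin

lemma solution_step:
  assumes "-ts n \<le> s" "s \<le> t" "t \<le> ts n"
  shows "(t - s, \<gamma>s n s) \<in> D" "\<gamma>s n t = Phi (t - s) (\<gamma>s n s)" "\<gamma>s n t \<in> M"
proof -
  have "s \<in> {-ts n..ts n}" "t \<in> {-ts n..ts n}"
    using assms by auto
  then show "(t - s, \<gamma>s n s) \<in> D" "\<gamma>s n t = Phi (t - s) (\<gamma>s n s)" "\<gamma>s n t \<in> M"
    using solution[of n] solution_in_M[of n] \<open>s \<le> t\<close> unfolding is_solution_def by blast+
qed

lemma eventually_ts_subseq_ge:
  assumes "strict_mono g"
  shows "eventually (\<lambda>k. B \<le> ts (g k)) sequentially"
  using filterlim_compose[OF ts_at_top filterlim_subseq[OF assms]]
  unfolding filterlim_at_top by auto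

lemma subseq_limit_in_M:
  assumes "strict_mono g" "(\<lambda>k. \<gamma>s (g k) s) \<longlonglongrightarrow> x"
  shows "x \<in> M"
proof (rule Lim_in_closed_set[OF closed_M _ _ assms(2)])
  show "eventually (\<lambda>k. \<gamma>s (g k) s \<in> M) sequentially"
    using eventually_ts_subseq_ge[OF assms(1), of "\<bar>s\<bar>"]
    by eventually_elim (auto intro: solution_step(3))
qed simp

lemma subseq_tendsto_flow:
  assumes "strict_mono g" "(\<lambda>k. \<gamma>s (g k) s) \<longlonglongrightarrow> x" "(\<tau>, x) \<in> D"
  shows "(\<lambda>k. \<gamma>s (g k) (s + \<tau>)) \<longlonglongrightarrow> Phi \<tau> x"
proof -
  have \<tau>: "0 \<le> \<tau>"
    using local_semiflow_domain_nonneg[OF semiflow assms(3)] .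
  have "(\<lambda>k. Phi \<tau> (\<gamma>s (g k) s)) \<longlonglongrightarrow> Phi \<tau> x"
    using local_semiflow_tendsto[OF semiflow tendsto_const assms(2,3)] \<tau> by simp
  moreover have "eventually (\<lambda>k. Phi \<tau> (\<gamma>s (g k) s) = \<gamma>s (g k) (s + \<tau>)) sequentially"
    using eventually_ts_subseq_ge[OF assms(1), of "\<bar>s\<bar> + \<tau>"]
  proof eventually_elim
    case (elim k)
    then have "- ts (g k) \<le> s" "s + \<tau> \<le> ts (g k)"
      using \<tau> by (auto simp: abs_le_iff)
    then show ?case
      using solution_step(2)[of "g k" s "s + \<tau>"] \<tau> by simp
  qed
  ultimately show ?thesis
    by (rule Lim_transform_eventually)
qed

lemma subseq_limit_forward_complete:
  assumes "strict_mono g" "(\<lambda>k. \<gamma>s (g k) s) \<longlonglongrightarrow> x" "0 \<le> \<tau>"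
  shows "(\<tau>, x) \<in> D"
proof -
  have "flow_image D Phi {0..} {x} \<subseteq> M"
  proof
    fix z assume "z \<in> flow_image D Phi {0..} {x}"
    then obtain \<sigma> where "z = Phi \<sigma> x" "(\<sigma>, x) \<in> D"
      unfolding flow_image_def by auto
    then show "z \<in> M"
      using subseq_limit_in_M[OF assms(1) subseq_tendsto_flow[OF assms(1,2)]] by simp
  qed
  then show ?thesis
    using strongly_admissible_M assms(3)
    unfolding strongly_admissible_def no_explosion_def by blast
qed

lemma subseq_tendsto_shift:
  assumes "strict_mono g" "(\<lambda>k. \<gamma>s (g k) s) \<longlonglongrightarrow> x" "0 \<le> \<tau>"
  shows "(\<lambda>k. \<gamma>s (g k) (s + \<tau>)) \<longlonglongrightarrow> Phi \<tau> x"
  using subseq_tendsto_flow[OF assms(1,2) subseq_limit_forward_complete[OF assms]] .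

text \<open>Admissibility is applied to the starting points \<open>\<gamma>\<^sub>k(-t\<^sub>k)\<close> and the times \<open>c + t\<^sub>k\<close>,
  along which the orbits are the solutions themselves.\<close>
lemma subseq_convergent_at:
  assumes "strict_mono (\<sigma> :: nat \<Rightarrow> nat)"
  shows "\<exists>r. strict_mono r \<and> convergent (\<lambda>k. \<gamma>s (\<sigma> (r k)) c)"
proof -
  obtain N where N: "\<And>j. \<bar>c\<bar> \<le> ts (\<sigma> (j + N))"
    using eventually_ts_subseq_ge[OF assms, of "\<bar>c\<bar>"]
    unfolding eventually_sequentially by (metis le_add2)
  define n where "n j = \<sigma> (j + N)" for j
  define xs where "xs j = \<gamma>s (n j) (- ts (n j))" for j
  define T where "T j = c + ts (n j)" for j
  have bounds: "\<bar>c\<bar> \<le> ts (n j)" for j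
    using N unfolding n_def .
  have "strict_mono n"
    using assms unfolding n_def strict_mono_def by simp
  then have T_at_top: "filterlim T at_top sequentially"
    unfolding T_def
    by (intro filterlim_tendsto_add_at_top[OF tendsto_const]
        filterlim_compose[OF ts_at_top filterlim_subseq])
  have ts_nonneg: "0 \<le> ts (n j)" for j
    using bounds[of j] abs_ge_zero[of c] by linarith
  have xs_M: "xs j \<in> M" for j
    using solution_step(3)[of "n j" "- ts (n j)" "- ts (n j)"] ts_nonneg[of j]
    unfolding xs_def by simp
  have T_D: "(T j, xs j) \<in> D" and flow_eq: "Phi (T j) (xs j) = \<gamma>s (n j) c" for j
    using solution_step(1,2)[of "n j" "- ts (n j)" c] bounds[of j]
    unfolding xs_def T_def by (auto simp: abs_le_iff)
  have orbit_M: "flow_image D Phi {0..T j} {xs j} \<subseteq> M" for j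
  proof
    fix z assume "z \<in> flow_image D Phi {0..T j} {xs j}"
    then obtain \<tau> where z: "z = Phi \<tau> (xs j)" "0 \<le> \<tau>" "\<tau> \<le> T j"
      unfolding flow_image_def by auto
    then have "- ts (n j) \<le> - ts (n j) + \<tau>" "- ts (n j) + \<tau> \<le> ts (n j)"
      using bounds[of j] unfolding T_def by (auto simp: abs_le_iff)
    then show "z \<in> M"
      using solution_step(2,3)[of "n j" "- ts (n j)" "- ts (n j) + \<tau>"] z(1)
      unfolding xs_def by simp
  qed
  obtain r y where "strict_mono r" "(\<lambda>k. Phi (T (r k)) (xs (r k))) \<longlonglongrightarrow> y"
    using strongly_admissible_M[unfolded strongly_admissible_def admissible_def, THEN conjunct1,
        rule_format, OF xs_M T_at_top orbit_M T_D] by blast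
  then show ?thesis
    unfolding flow_eq n_def convergent_def
    by (intro exI[of _ "\<lambda>k. r k + N"]) (auto simp: strict_mono_def)
qed

lemma diagonal_subseq_convergent_at_integers:
  "\<exists>d. strict_mono d \<and> (\<forall>n. convergent (\<lambda>k. \<gamma>s (d k) (- real n)))"
proof -
  interpret diagonal: subseqs "\<lambda>n s. convergent (\<lambda>k. \<gamma>s (s k) (- real n))"
    by unfold_locales (simp add: subseq_convergent_at o_def)
  have tail: "convergent (\<lambda>k. \<gamma>s ((diagonal.diagseq \<circ> (+) (Suc n)) k) (- real n))" for n
  proof (rule diagonal.diagseq_holds)
    fix r s m
    assume "strict_mono (r :: nat \<Rightarrow> nat)" "convergent (\<lambda>k. \<gamma>s (s k) (- real m))"
    from convergent_subseq_convergent[OF this(2,1)]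
    show "convergent (\<lambda>k. \<gamma>s ((s \<circ> r) k) (- real m))"
      by (simp add: o_def)
  qed
  have "convergent (\<lambda>k. \<gamma>s (diagonal.diagseq k) (- real n))" for n
  proof -
    obtain y where "(\<lambda>k. \<gamma>s (diagonal.diagseq (k + Suc n)) (- real n)) \<longlonglongrightarrow> y"
      using tail[of n] unfolding convergent_def by (auto simp: o_def add.commute)
    then show ?thesis
      unfolding convergent_def by (blast intro: LIMSEQ_offset)
  qed
  with diagonal.subseq_diagseq show ?thesis
    by auto
qed

lemma pointwise_convergent_subseq:
  "\<exists>d \<gamma>. strict_mono d \<and> (\<forall>t. (\<lambda>k. \<gamma>s (d k) t) \<longlonglongrightarrow> \<gamma> t)"
proof -
  obtain d where d: "strict_mono d" "\<And>n. convergent (\<lambda>k. \<gamma>s (d k) (- real n))"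
    using diagonal_subseq_convergent_at_integers by blast
  have "convergent (\<lambda>k. \<gamma>s (d k) t)" for t
  proof -
    define n where "n = nat \<lceil>\<bar>t\<bar>\<rceil>"
    obtain y where "(\<lambda>k. \<gamma>s (d k) (- real n)) \<longlonglongrightarrow> y"
      using d(2) unfolding convergent_def by blast
    moreover have "0 \<le> t + real n"
      unfolding n_def by linarith
    ultimately have "(\<lambda>k. \<gamma>s (d k) (- real n + (t + real n))) \<longlonglongrightarrow> Phi (t + real n) y"
      by (rule subseq_tendsto_shift[OF d(1)])
    then show ?thesis
      unfolding convergent_def by auto
  qed
  with d(1) show ?thesis
    unfolding convergent_LIMSEQ_iff
    by (intro exI[of _ d] exI[of _ "\<lambda>t. lim (\<lambda>k. \<gamma>s (d k) t)"]) simp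
qed

lemma pointwise_limit_is_full_solution:
  assumes "strict_mono d" "\<And>t. (\<lambda>k. \<gamma>s (d k) t) \<longlonglongrightarrow> \<gamma> t"
  shows "is_solution D Phi UNIV \<gamma>" "range \<gamma> \<subseteq> M"
proof -
  have "(t - s, \<gamma> s) \<in> D \<and> \<gamma> t = Phi (t - s) (\<gamma> s)" if "s \<le> t" for s t
  proof
    show "(t - s, \<gamma> s) \<in> D"
      using subseq_limit_forward_complete[OF assms(1) assms(2)[of s], of "t - s"] that by simp
    have "(\<lambda>k. \<gamma>s (d k) (s + (t - s))) \<longlonglongrightarrow> Phi (t - s) (\<gamma> s)"
      using subseq_tendsto_shift[OF assms(1) assms(2)[of s], of "t - s"] that by simp
    then show "\<gamma> t = Phi (t - s) (\<gamma> s)"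
      using LIMSEQ_unique[OF assms(2)[of t]] by simp
  qed
  then show "is_solution D Phi UNIV \<gamma>"
    unfolding is_solution_def by blast
  show "range \<gamma> \<subseteq> M"
    using subseq_limit_in_M[OF assms] by blast
qed

lemma subseq_tendsto_at_converging_times:
  assumes "strict_mono g" "\<And>t. (\<lambda>k. \<gamma>s (g k) t) \<longlonglongrightarrow> \<gamma> t"
    and "\<tau> \<longlonglongrightarrow> t" "\<And>j. \<tau> j \<in> {a..b}"
  shows "(\<lambda>j. \<gamma>s (g j) (\<tau> j)) \<longlonglongrightarrow> \<gamma> t"
proof -
  define s where "s = min a t"
  have "s \<le> t" unfolding s_def by simp
  then have "(t - s, \<gamma> s) \<in> D" and \<gamma>t: "\<gamma> t = Phi (t - s) (\<gamma> s)"
    using pointwise_limit_is_full_solution(1)[OF assms(1,2)] unfolding is_solution_def by auto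
  then have "(\<lambda>j. Phi (\<tau> j - s) (\<gamma>s (g j) s)) \<longlonglongrightarrow> \<gamma> t"
    using local_semiflow_tendsto[OF semiflow tendsto_diff[OF assms(3) tendsto_const] assms(2)]
      assms(4) by (simp add: s_def min_le_iff_disj)
  moreover have "eventually (\<lambda>j. Phi (\<tau> j - s) (\<gamma>s (g j) s) = \<gamma>s (g j) (\<tau> j)) sequentially"
    using eventually_ts_subseq_ge[OF assms(1), of "\<bar>s\<bar> + \<bar>b\<bar>"]
  proof eventually_elim
    case (elim j)
    have "s \<le> \<tau> j" "\<tau> j \<le> b" using assms(4)[of j] by (auto simp: s_def)
    with elim show ?case using solution_step(2)[of "g j" s "\<tau> j"] by simp
  qed
  ultimately show ?thesis
    by (rule Lim_transform_eventually)
qed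

lemma trace_eventually_in_nbhd:
  assumes "strict_mono d" "\<And>t. (\<lambda>k. \<gamma>s (d k) t) \<longlonglongrightarrow> \<gamma> t"
    and "nbhd_in V {a..b} (sol_trace \<gamma> {a..b})"
  shows "\<exists>k0. \<forall>k>k0. sol_trace (\<gamma>s (d k)) {a..b} \<subseteq> V"
proof (rule ccontr)
  assume "\<not> ?thesis"
  then have "infinite {k. \<exists>t\<in>{a..b}. (t, \<gamma>s (d k) t) \<notin> V}"
    unfolding infinite_nat_iff_unbounded sol_trace_def by blast
  then obtain q :: "nat \<Rightarrow> nat" where q: "strict_mono q"
    and "\<forall>j. \<exists>t\<in>{a..b}. (t, \<gamma>s (d (q j)) t) \<notin> V"
    using infinite_enumerate by blast
  then obtain \<tau> where \<tau>: "\<And>j. \<tau> j \<in> {a..b}" and bad: "\<And>j. (\<tau> j, \<gamma>s (d (q j)) (\<tau> j)) \<notin> V"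
    by metis
  obtain t r where t: "t \<in> {a..b}" and r: "strict_mono r" and "(\<tau> \<circ> r) \<longlonglongrightarrow> t"
    using compact_imp_seq_compact[OF compact_Icc] \<tau> unfolding seq_compact_def by metis
  then have \<tau>r: "(\<lambda>j. \<tau> (r j)) \<longlonglongrightarrow> t"
    by (simp add: o_def)
  define g where "g = d \<circ> q \<circ> r"
  have "strict_mono g"
    unfolding g_def using assms(1) q r by (intro strict_mono_o)
  moreover have "(\<lambda>k. \<gamma>s (g k) s) \<longlonglongrightarrow> \<gamma> s" for s
    using LIMSEQ_subseq_LIMSEQ[OF assms(2) strict_mono_o[OF q r]] by (simp add: g_def o_def)
  ultimately have "(\<lambda>j. \<gamma>s (g j) (\<tau> (r j))) \<longlonglongrightarrow> \<gamma> t"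
    using subseq_tendsto_at_converging_times[OF _ _ \<tau>r] \<tau> by blast
  with \<tau>r have "((\<lambda>j. (\<tau> (r j), \<gamma>s (g j) (\<tau> (r j)))) \<longlongrightarrow> (t, \<gamma> t)) sequentially"
    by (rule tendsto_Pair)
  moreover have "eventually (\<lambda>j. (\<tau> (r j), \<gamma>s (g j) (\<tau> (r j))) \<in> {a..b} \<times> UNIV) sequentially"
    using \<tau> by simp
  ultimately have "eventually (\<lambda>j. (\<tau> (r j), \<gamma>s (g j) (\<tau> (r j))) \<in> V) sequentially"
    using nbhd_in_eventually[OF assms(3), of "(t, \<gamma> t)"] t unfolding sol_trace_def by blast
  then show False
    using bad by (simp add: g_def)
qed

end

theorem proposition2p8:
  fixes D :: "(real \<times> 'a::t2_space) set"
    and Phi :: "real \<Rightarrow> 'a \<Rightarrow> 'a"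
    and M :: "'a set"
    and \<gamma>s :: "nat \<Rightarrow> real \<Rightarrow> 'a"
    and ts :: "nat \<Rightarrow> real"
  assumes "local_semiflow D Phi"
    and "closed M"
    and "strongly_admissible D Phi M"
    and "\<And>n. is_solution D Phi {-ts n..ts n} (\<gamma>s n)"
    and "\<And>n. \<gamma>s n ` {-ts n..ts n} \<subseteq> M"
    and "filterlim ts at_top sequentially"
  shows "\<exists>(r::nat \<Rightarrow> nat) \<gamma>. strict_mono r \<and> is_solution D Phi UNIV \<gamma> \<and> range \<gamma> \<subseteq> M \<and>
           (\<forall>a b V. a \<le> b \<longrightarrow> nbhd_in V {a..b} (sol_trace \<gamma> {a..b}) \<longrightarrow>
              (\<exists>k0. \<forall>k>k0. sol_trace (\<gamma>s (r k)) {a..b} \<subseteq> V))"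
proof -
  interpret solution_sequence D Phi M \<gamma>s ts
    using assms by unfold_locales
  obtain d \<gamma> where d: "strict_mono d" and lim: "\<And>t. (\<lambda>k. \<gamma>s (d k) t) \<longlonglongrightarrow> \<gamma> t"
    using pointwise_convergent_subseq by blast
  show ?thesis
    using d pointwise_limit_is_full_solution[OF d lim] trace_eventually_in_nbhd[OF d lim]
    by blast
qed

end
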